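(* With the notation of the context, for every $v\in V$, $$\kappa_A(v)+\kappa_B(\phi(v))\ \le\ L-1+\frac2N.$$
   Context: Let $A,B$ be groups, $L\ge1$, $a_1,\dots,a_L\in A\setminus\{1\}$, $b_1,\dots,b_L\in B\setminus\{1\}$. Let $N\in\{2,3,\dots\}\cup\{\infty\}$ be the minimum of the orders of $a_1,\dots,a_L,b_1,\dots,b_L$ (convention $1/\infty=0$). Let $W$ be the real vector space with basis the formal symbols $(i,j)$, $1\le i,j\le L$. Let $V=\{\sum_{i,j}x_{ij}(i,j): x_{ij}\ge0,\ \sum_i x_{ij}=1 \text{ for all } j,\ \sum_j x_{ij}=1\text{ for all } i\}$. A disk vector in $A$ is an element of $W$ of the form $\sum_{j=1}^k (i_j,i_{j+1})$ with $k\ge1$, indices $i_1,\dots,i_k\in\{1,\dots,L\}$, $i_{k+1}=i_1$, and $a_{i_1}a_{i_2}\cdots a_{i_k}=1$ in $A$; let $\mathcal D_A$ be the set of disk vectors in $A$, and define $\mathcal D_B$ analogously using the $b_i$. For $v\in V$ set $\kappa_A(v)=\sup\{\sum_s t_s : v=\sum_s t_s d_s+\sum_{i,j}x'_{ij}(i,j),\ t_s\ge0,\ d_s\in\mathcal D_A,\ x'_{ij}\ge 0\}$ (finite sums), and define $\kappa_B$ analogously with $\mathcal D_B$. Let $\phi:V\to V$ be the map $\phi(\sum_{i,j}x_{ij}(i,j))=\sum_{i,j}x_{ij}(j-1,i)$, where $j-1$ is read as $L$ when $j=1$. *)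

theory Defs
  imports "HOL-Algebra.Multiplicative_Group" "HOL-Library.Extended_Nat" Complex_Main
begin

definition elem_order :: "('a, 'c) monoid_scheme \<Rightarrow> 'a \<Rightarrow> enat" where
  "elem_order G x = (if group.ord G x = 0 then \<infinity> else enat (group.ord G x))"

definition recip_enat :: "enat \<Rightarrow> real" where
  "recip_enat N = (case N of enat n \<Rightarrow> 1 / real n | \<infinity> \<Rightarrow> 0)"

definition min_order ::
  "('a, 'c) monoid_scheme \<Rightarrow> ('b, 'd) monoid_scheme \<Rightarrow> nat \<Rightarrow> (nat \<Rightarrow> 'a) \<Rightarrow> (nat \<Rightarrow> 'b) \<Rightarrow> enat" where
  "min_order A B L a b =
     Min ((\<lambda>i. elem_order A (a i)) ` {1..L} \<union> (\<lambda>i. elem_order B (b i)) ` {1..L})"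

text \<open>Elements of W are represented as functions on index pairs; only pairs in {1..L}^2 matter.\<close>
definition in_V :: "nat \<Rightarrow> (nat \<times> nat \<Rightarrow> real) \<Rightarrow> bool" where
  "in_V L v \<longleftrightarrow>
     (\<forall>i\<in>{1..L}. \<forall>j\<in>{1..L}. v (i, j) \<ge> 0) \<and>
     (\<forall>j\<in>{1..L}. (\<Sum>i=1..L. v (i, j)) = 1) \<and>
     (\<forall>i\<in>{1..L}. (\<Sum>j=1..L. v (i, j)) = 1)"

definition cyc_vec :: "nat list \<Rightarrow> nat \<times> nat \<Rightarrow> real" where
  "cyc_vec is p = real (card {m. m < length is \<and>
       (is ! m, is ! ((m + 1) mod length is)) = p})"

definition disk_word :: "('a, 'c) monoid_scheme \<Rightarrow> nat \<Rightarrow> (nat \<Rightarrow> 'a) \<Rightarrow> nat list \<Rightarrow> bool" where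
  "disk_word G L a is \<longleftrightarrow> is \<noteq> [] \<and> set is \<subseteq> {1..L} \<and>
     foldr (\<lambda>i y. a i \<otimes>\<^bsub>G\<^esub> y) is \<one>\<^bsub>G\<^esub> = \<one>\<^bsub>G\<^esub>"

definition disk_vectors :: "('a, 'c) monoid_scheme \<Rightarrow> nat \<Rightarrow> (nat \<Rightarrow> 'a) \<Rightarrow> (nat \<times> nat \<Rightarrow> real) set" where
  "disk_vectors G L a = cyc_vec ` {is. disk_word G L a is}"

text \<open>kappa: sup of sum t_s over finite families with v = sum t_s d_s + (nonnegative remainder).
  A finite family is a list of pairs (t_s, d_s).\<close>
definition kappa :: "('a, 'c) monoid_scheme \<Rightarrow> nat \<Rightarrow> (nat \<Rightarrow> 'a) \<Rightarrow> (nat \<times> nat \<Rightarrow> real) \<Rightarrow> real" where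
  "kappa G L a v = Sup {sum_list (map fst ts) | ts.
      (\<forall>(t, d)\<in>set ts. t \<ge> 0 \<and> d \<in> disk_vectors G L a) \<and>
      (\<forall>i\<in>{1..L}. \<forall>j\<in>{1..L}.
          \<exists>x'. x' \<ge> 0 \<and> v (i, j) = sum_list (map (\<lambda>(t, d). t * d (i, j)) ts) + x')}"

text \<open>phi(sum x_ij (i,j)) = sum x_ij (j-1, i), with j-1 read as L when j = 1;
  i.e. the coefficient of (p,q) in phi v is the coefficient of (q, p+1) in v (p+1 read as 1 when p = L).\<close>
definition phi :: "nat \<Rightarrow> (nat \<times> nat \<Rightarrow> real) \<Rightarrow> (nat \<times> nat \<Rightarrow> real)" where
  "phi L v = (\<lambda>(p, q). v (q, if p = L then 1 else p + 1))"

end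

theory Submission
  imports Defs
begin

text \<open>Weak duality: if a weighting w \<ge> 0 of the pairs (i, j) gives every disk vector weight
  at least 1, then kappa(v) is at most the w-weight of v. Weight r = 1/N on the diagonal takes care of
  the disk vectors of constant words i^k, since then k \<ge> N. A non-constant cyclic word has an ascent
  and a descent, so for it weight 1 on the pairs i < j suffices, and so does weight 1/2 on all
  off-diagonal pairs. For v together with phi v the first weighting sums to L - 1 + r D and the second
  to L + (r - 1/2) D, where D is the diagonal mass of v and phi v; as r \<le> 1/2, one of the two is at
  most L - 1 + 2 r.\<close>

definition weighted_sum :: "nat \<Rightarrow> (nat \<times> nat \<Rightarrow> real) \<Rightarrow> (nat \<times> nat \<Rightarrow> real) \<Rightarrow> real" where
  "weighted_sum L w f = (\<Sum>p\<in>{1..L} \<times> {1..L}. w p * f p)"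

lemma weighted_sum_mono:
  assumes "\<And>p. p \<in> {1..L} \<times> {1..L} \<Longrightarrow> 0 \<le> w p"
    and "\<And>p. p \<in> {1..L} \<times> {1..L} \<Longrightarrow> f p \<le> g p"
  shows "weighted_sum L w f \<le> weighted_sum L w g"
  unfolding weighted_sum_def by (intro sum_mono mult_left_mono) (auto intro: assms)

lemma weighted_sum_add: "weighted_sum L w (\<lambda>p. f p + g p) = weighted_sum L w f + weighted_sum L w g"
  by (simp add: weighted_sum_def distrib_left sum.distrib)

lemma weighted_sum_scale: "weighted_sum L w (\<lambda>p. c * f p) = c * weighted_sum L w f"
  by (simp add: weighted_sum_def sum_distrib_left mult.left_commute)

lemma weighted_sum_combination:
  "weighted_sum L w (\<lambda>p. sum_list (map (\<lambda>(t, d). t * d p) ts))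
     = sum_list (map (\<lambda>(t, d). t * weighted_sum L w d) ts)"
  by (induction ts) (auto simp: weighted_sum_add weighted_sum_scale, simp add: weighted_sum_def)

lemma kappa_le_weighted_sum:
  assumes w_nonneg: "\<And>p. p \<in> {1..L} \<times> {1..L} \<Longrightarrow> 0 \<le> w p"
    and v_nonneg: "\<And>i j. i \<in> {1..L} \<Longrightarrow> j \<in> {1..L} \<Longrightarrow> 0 \<le> v (i, j)"
    and disk: "\<And>d. d \<in> disk_vectors G L a \<Longrightarrow> 1 \<le> weighted_sum L w d"
  shows "kappa G L a v \<le> weighted_sum L w v"
  unfolding kappa_def
proof (rule cSup_least, goal_cases)
  case 1
  show ?case using v_nonneg by (auto intro!: exI[of _ "[]"])
next
  case (2 x)
  then obtain ts where x: "x = sum_list (map fst ts)"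
    and disks: "\<forall>(t, d)\<in>set ts. t \<ge> 0 \<and> d \<in> disk_vectors G L a"
    and below: "\<forall>i\<in>{1..L}. \<forall>j\<in>{1..L}.
          \<exists>x'. x' \<ge> 0 \<and> v (i, j) = sum_list (map (\<lambda>(t, d). t * d (i, j)) ts) + x'"
    by blast
  have "x \<le> sum_list (map (\<lambda>(t, d). t * weighted_sum L w d) ts)"
    unfolding x
  proof (intro sum_list_mono)
    fix td assume "td \<in> set ts"
    then obtain t d where "td = (t, d)" "0 \<le> t" "1 \<le> weighted_sum L w d"
      using disks disk by fastforce
    then show "fst td \<le> (case td of (t, d) \<Rightarrow> t * weighted_sum L w d)"
      using mult_left_mono[of 1 "weighted_sum L w d" t] by simp
  qed
  also have "\<dots> = weighted_sum L w (\<lambda>p. sum_list (map (\<lambda>(t, d). t * d p) ts))"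
    by (rule weighted_sum_combination[symmetric])
  also have "\<dots> \<le> weighted_sum L w v"
    using below by (intro weighted_sum_mono w_nonneg) fastforce+
  finally show ?case .
qed

lemma weighted_sum_cyc_vec:
  assumes "set ws \<subseteq> {1..L}"
  shows "weighted_sum L w (cyc_vec ws) = (\<Sum>m<length ws. w (ws ! m, ws ! ((m + 1) mod length ws)))"
proof -
  define k where "k = length ws"
  define e where "e m = (ws ! m, ws ! ((m + 1) mod k))" for m
  have e_in: "e m \<in> {1..L} \<times> {1..L}" if "m < k" for m
  proof -
    have "ws ! m \<in> set ws" "ws ! ((m + 1) mod k) \<in> set ws"
      using that by (auto simp: k_def intro!: nth_mem mod_less_divisor)
    then show ?thesis using assms by (auto simp: e_def)
  qed
  have count: "cyc_vec ws p = (\<Sum>m<k. if e m = p then 1 else 0)" for p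
    unfolding cyc_vec_def e_def k_def by (simp add: sum.inter_filter[symmetric] lessThan_def conj_commute)
  have "weighted_sum L w (cyc_vec ws) = (\<Sum>p\<in>{1..L} \<times> {1..L}. \<Sum>m<k. if e m = p then w p else 0)"
    unfolding weighted_sum_def count sum_distrib_left by (auto intro!: sum.cong)
  also have "\<dots> = (\<Sum>m<k. \<Sum>p\<in>{1..L} \<times> {1..L}. if e m = p then w p else 0)"
    by (rule sum.swap)
  also have "\<dots> = (\<Sum>m<k. w (e m))"
    using e_in by (simp add: sum.delta)
  finally show ?thesis unfolding e_def k_def .
qed

lemma cyclic_antimono_imp_const:
  fixes f :: "nat \<Rightarrow> 'a::linorder"
  assumes "0 < k" and succ_le: "\<And>m. m < k \<Longrightarrow> f ((m + 1) mod k) \<le> f m" and "m < k"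
  shows "f m = f 0"
proof -
  have antimono: "f j \<le> f i" if "i \<le> j" "j < k" for i j
    using that
  proof (induction j rule: dec_induct)
    case (step j)
    then have "f (Suc j) \<le> f j" using succ_le[of j] by simp
    with step show ?case by simp
  qed simp
  have "f 0 \<le> f (k - 1)" using succ_le[of "k - 1"] \<open>0 < k\<close> by simp
  also have "f (k - 1) \<le> f m" using antimono[of m "k - 1"] \<open>m < k\<close> by simp
  finally show ?thesis using antimono[of 0 m] \<open>m < k\<close> by simp
qed

lemma cyclic_word_ascent_descent:
  fixes ws :: "nat list"
  assumes "ws \<noteq> []" and "\<exists>m<length ws. ws ! m \<noteq> ws ! 0"
  shows "\<exists>m<length ws. ws ! m < ws ! ((m + 1) mod length ws)"
    and "\<exists>m<length ws. ws ! ((m + 1) mod length ws) < ws ! m"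
proof (rule_tac [!] ccontr)
  assume "\<not> (\<exists>m<length ws. ws ! m < ws ! ((m + 1) mod length ws))"
  then have "ws ! ((m + 1) mod length ws) \<le> ws ! m" if "m < length ws" for m
    using that leI by blast
  then have "ws ! m = ws ! 0" if "m < length ws" for m
    using cyclic_antimono_imp_const[of "length ws" "(!) ws"] that assms(1) by blast
  with assms(2) show False by blast
next
  assume "\<not> (\<exists>m<length ws. ws ! ((m + 1) mod length ws) < ws ! m)"
  then have "- int (ws ! ((m + 1) mod length ws)) \<le> - int (ws ! m)" if "m < length ws" for m
    using that leI by fastforce
  then have "- int (ws ! m) = - int (ws ! 0)" if "m < length ws" for m
    using cyclic_antimono_imp_const[of "length ws" "\<lambda>m. - int (ws ! m)"] that assms(1) by blast
  with assms(2) show False by auto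
qed

lemma (in monoid) foldr_replicate_eq_pow:
  assumes "f x \<in> carrier G"
  shows "foldr (\<lambda>i y. f i \<otimes> y) (replicate k x) \<one> = f x [^] k"
  using assms by (induction k) (simp_all add: nat_pow_Suc2 del: nat_pow_Suc Group.nat_pow_Suc)

lemma disk_word_cases:
  assumes "group G" and carrier: "\<And>i. i \<in> {1..L} \<Longrightarrow> a i \<in> carrier G"
    and "disk_word G L a ws"
  obtains x where "x \<in> {1..L}" "ws = replicate (length ws) x" "a x [^]\<^bsub>G\<^esub> length ws = \<one>\<^bsub>G\<^esub>"
  | "\<exists>m<length ws. ws ! m < ws ! ((m + 1) mod length ws)"
    "\<exists>m<length ws. ws ! ((m + 1) mod length ws) < ws ! m"
proof (cases "\<forall>m<length ws. ws ! m = ws ! 0")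
  case True
  have ne: "ws \<noteq> []" and sub: "set ws \<subseteq> {1..L}"
    and prod: "foldr (\<lambda>i y. a i \<otimes>\<^bsub>G\<^esub> y) ws \<one>\<^bsub>G\<^esub> = \<one>\<^bsub>G\<^esub>"
    using \<open>disk_word G L a ws\<close> unfolding disk_word_def by auto
  have rep: "ws = replicate (length ws) (ws ! 0)"
    using True by (intro nth_equalityI) auto
  have x: "ws ! 0 \<in> {1..L}" using ne sub nth_mem by blast
  have "a (ws ! 0) [^]\<^bsub>G\<^esub> length ws
      = foldr (\<lambda>i y. a i \<otimes>\<^bsub>G\<^esub> y) (replicate (length ws) (ws ! 0)) \<one>\<^bsub>G\<^esub>"
    using monoid.foldr_replicate_eq_pow[of G a "ws ! 0"] group.is_monoid[OF \<open>group G\<close>] carrier[OF x]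
    by simp
  also have "\<dots> = \<one>\<^bsub>G\<^esub>" using prod by (simp only: rep[symmetric])
  finally show ?thesis using x rep that(1) by blast
next
  case False
  then show ?thesis
    using \<open>disk_word G L a ws\<close> cyclic_word_ascent_descent that(2)
    unfolding disk_word_def by blast
qed

lemma weighted_sum_disk_vector_ge_1:
  assumes "group G" and "\<And>i. i \<in> {1..L} \<Longrightarrow> a i \<in> carrier G"
    and w_nonneg: "\<And>p. 0 \<le> w p"
    and loop: "\<And>x k. x \<in> {1..L} \<Longrightarrow> 0 < k \<Longrightarrow> a x [^]\<^bsub>G\<^esub> k = \<one>\<^bsub>G\<^esub> \<Longrightarrow> 1 \<le> real k * w (x, x)"
    and ascent_descent: "\<And>i j i' j'. i < j \<Longrightarrow> j' < i' \<Longrightarrow> 1 \<le> w (i, j) + w (i', j')"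
    and "d \<in> disk_vectors G L a"
  shows "1 \<le> weighted_sum L w d"
proof -
  obtain ws where d: "d = cyc_vec ws" and dw: "disk_word G L a ws"
    using \<open>d \<in> disk_vectors G L a\<close> unfolding disk_vectors_def by auto
  define k where "k = length ws"
  define e where "e m = (ws ! m, ws ! ((m + 1) mod k))" for m
  have sum: "weighted_sum L w d = (\<Sum>m<k. w (e m))"
    using dw weighted_sum_cyc_vec unfolding d e_def k_def disk_word_def by blast
  show ?thesis
  proof (rule disk_word_cases[OF assms(1,2) dw])
    fix x assume x: "x \<in> {1..L}" and rep: "ws = replicate (length ws) x"
      and pow: "a x [^]\<^bsub>G\<^esub> length ws = \<one>\<^bsub>G\<^esub>"
    have x_all: "ws ! i = x" if "i < k" for i
      using rep that unfolding k_def by (metis nth_replicate)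
    have "e m = (x, x)" if "m < k" for m
      using that by (simp add: e_def x_all)
    then have "weighted_sum L w d = real k * w (x, x)" by (simp add: sum)
    moreover have "0 < k" using dw unfolding disk_word_def k_def by simp
    ultimately show ?thesis using loop x pow unfolding k_def by simp
  next
    assume "\<exists>m<length ws. ws ! m < ws ! ((m + 1) mod length ws)"
      and "\<exists>m<length ws. ws ! ((m + 1) mod length ws) < ws ! m"
    then obtain m m' where m: "m < k" "fst (e m) < snd (e m)"
      and m': "m' < k" "snd (e m') < fst (e m')"
      unfolding e_def k_def by auto
    then have "m \<noteq> m'" by auto
    have "1 \<le> w (e m) + w (e m')" using m m' ascent_descent by (metis prod.collapse)
    also have "\<dots> = (\<Sum>n\<in>{m, m'}. w (e n))" using \<open>m \<noteq> m'\<close> by simp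
    also have "\<dots> \<le> (\<Sum>n<k. w (e n))" using m m' w_nonneg by (intro sum_mono2) auto
    finally show ?thesis using sum by simp
  qed
qed

lemma elem_order_ge_2:
  assumes "group G" "x \<in> carrier G" "x \<noteq> \<one>\<^bsub>G\<^esub>"
  shows "2 \<le> elem_order G x"
proof -
  have "group.ord G x \<noteq> 1" using group.ord_eq_1[OF assms(1,2)] assms(3) by simp
  then show ?thesis
    unfolding elem_order_def by (cases "group.ord G x") (auto simp: numeral_eq_enat)
qed

lemma exponent_mult_recip_order_ge_1:
  assumes "group G" "x \<in> carrier G" "x [^]\<^bsub>G\<^esub> k = \<one>\<^bsub>G\<^esub>" "0 < k"
    and "0 < N" "N \<le> elem_order G x"
  shows "1 \<le> real k * recip_enat N"
proof -
  interpret group G by fact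
  have "ord x dvd k" using assms(2,3) pow_eq_id by blast
  then have "0 < ord x" "ord x \<le> k" using \<open>0 < k\<close> by (auto intro: dvd_imp_le)
  then obtain n where "N = enat n" "0 < n" "n \<le> k"
    using assms(5,6) unfolding elem_order_def by (cases N) (auto simp: zero_enat_def)
  then show ?thesis unfolding recip_enat_def by (simp add: field_simps)
qed

lemma min_order_le:
  assumes "i \<in> {1..L}"
  shows "min_order A B L a b \<le> elem_order A (a i)"
    and "min_order A B L a b \<le> elem_order B (b i)"
  using assms unfolding min_order_def by (auto intro: Min_le)

lemma two_le_min_order:
  assumes "group A" "group B" "1 \<le> L"
    and "\<And>i. i \<in> {1..L} \<Longrightarrow> a i \<in> carrier A - {\<one>\<^bsub>A\<^esub>}"
    and "\<And>i. i \<in> {1..L} \<Longrightarrow> b i \<in> carrier B - {\<one>\<^bsub>B\<^esub>}"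
  shows "2 \<le> min_order A B L a b"
  using assms unfolding min_order_def by (auto intro!: Min.boundedI elem_order_ge_2)

lemma recip_enat_bounds:
  assumes "2 \<le> N"
  shows "0 \<le> recip_enat N" and "recip_enat N \<le> 1 / 2"
  using assms by (cases N; simp add: recip_enat_def numeral_eq_enat field_simps)+

definition upper_weight :: "real \<Rightarrow> nat \<times> nat \<Rightarrow> real" where
  "upper_weight r = (\<lambda>(i, j). if i < j then 1 else if i = j then r else 0)"

definition half_weight :: "real \<Rightarrow> nat \<times> nat \<Rightarrow> real" where
  "half_weight r = (\<lambda>(i, j). if i = j then r else 1 / 2)"

lemma kappa_le_weighted_sum_order:
  assumes "group G" and a: "\<And>i. i \<in> {1..L} \<Longrightarrow> a i \<in> carrier G \<and> N \<le> elem_order G (a i)"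
    and "0 < N"
    and w_nonneg: "\<And>p. 0 \<le> w p" and w_diag: "\<And>i. w (i, i) = recip_enat N"
    and "\<And>i j i' j'. i < j \<Longrightarrow> j' < i' \<Longrightarrow> 1 \<le> w (i, j) + w (i', j')"
    and "\<And>i j. i \<in> {1..L} \<Longrightarrow> j \<in> {1..L} \<Longrightarrow> 0 \<le> v (i, j)"
  shows "kappa G L a v \<le> weighted_sum L w v"
proof (rule kappa_le_weighted_sum)
  fix d assume d: "d \<in> disk_vectors G L a"
  show "1 \<le> weighted_sum L w d"
  proof (rule weighted_sum_disk_vector_ge_1[where G = G and a = a])
    fix x and k :: nat
    assume x: "x \<in> {1..L}" and k: "0 < k" and pow: "a x [^]\<^bsub>G\<^esub> k = \<one>\<^bsub>G\<^esub>"
    have "1 \<le> real k * recip_enat N"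
      using exponent_mult_recip_order_ge_1[OF \<open>group G\<close> _ pow k \<open>0 < N\<close>] a[OF x] by blast
    with w_diag show "1 \<le> real k * w (x, x)" by simp
  qed (use assms d in auto)
qed (use assms in auto)

definition upper_sum :: "nat \<Rightarrow> (nat \<times> nat \<Rightarrow> real) \<Rightarrow> real" where
  "upper_sum L f = (\<Sum>i=1..L. \<Sum>j=1..L. if i < j then f (i, j) else 0)"

definition diag_sum :: "nat \<Rightarrow> (nat \<times> nat \<Rightarrow> real) \<Rightarrow> real" where
  "diag_sum L f = (\<Sum>i=1..L. f (i, i))"

lemma weighted_sum_upper_weight:
  "weighted_sum L (upper_weight r) f = upper_sum L f + r * diag_sum L f"
proof -
  have "weighted_sum L (upper_weight r) f
      = (\<Sum>i=1..L. \<Sum>j=1..L. (if i < j then f (i, j) else 0) + (if i = j then r * f (i, j) else 0))"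
    unfolding weighted_sum_def upper_weight_def sum.cartesian_product'
    by (intro sum.cong refl) auto
  then show ?thesis
    by (simp add: upper_sum_def diag_sum_def sum.distrib sum_distrib_left sum.delta')
qed

lemma weighted_sum_half_weight:
  assumes "\<And>i. i \<in> {1..L} \<Longrightarrow> (\<Sum>j=1..L. f (i, j)) = 1"
  shows "weighted_sum L (half_weight r) f = real L / 2 + (r - 1 / 2) * diag_sum L f"
proof -
  have "weighted_sum L (half_weight r) f
      = (\<Sum>i=1..L. (\<Sum>j=1..L. f (i, j)) / 2 + (r - 1 / 2) * (\<Sum>j=1..L. if i = j then f (i, j) else 0))"
    unfolding weighted_sum_def half_weight_def sum.cartesian_product'
      sum_divide_distrib sum_distrib_left sum.distrib[symmetric]
    by (intro sum.cong refl) (auto simp: algebra_simps)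
  also have "\<dots> = (\<Sum>i=1..L. 1 / 2 + (r - 1 / 2) * f (i, i))"
    using assms by (intro sum.cong refl) simp
  finally show ?thesis
    by (simp add: diag_sum_def sum.distrib sum_distrib_left)
qed

lemma sum_cyclic_succ:
  fixes L :: nat
  assumes "1 \<le> L"
  shows "(\<Sum>p=1..L. g (if p = L then 1 else p + 1)) = (\<Sum>j=1..L. g j)"
proof -
  obtain n where L: "L = Suc n" using assms by (cases L) auto
  have "(\<Sum>p=1..L. g (if p = L then 1 else p + 1)) = (\<Sum>p=1..n. g (Suc p)) + g 1"
    unfolding L by (subst sum.cl_ivl_Suc) (auto intro!: sum.cong)
  also have "(\<Sum>p=1..n. g (Suc p)) = (\<Sum>j=2..L. g j)"
    unfolding L numeral_2_eq_2 by (simp only: sum.shift_bounds_cl_Suc_ivl One_nat_def)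
  also have "(\<Sum>j=2..L. g j) + g 1 = (\<Sum>j=1..L. g j)"
    using assms by (simp add: sum.atLeast_Suc_atMost numeral_2_eq_2 add.commute)
  finally show ?thesis .
qed

lemma in_V_phi:
  assumes "1 \<le> L" and "in_V L v"
  shows "in_V L (phi L v)"
proof -
  have succ_in: "(if p = L then 1 else p + 1) \<in> {1..L}" if "p \<in> {1..L}" for p
    using that by auto
  have "(\<Sum>p=1..L. v (q, if p = L then 1 else p + 1)) = 1" if "q \<in> {1..L}" for q
    using sum_cyclic_succ[OF assms(1), of "\<lambda>j. v (q, j)"] assms(2) that unfolding in_V_def by simp
  then show ?thesis
    using assms(2) succ_in unfolding in_V_def phi_def by auto
qed

text \<open>The strictly upper part of phi v is the part of v with 2 \<le> j \<le> i, so together with the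
  strictly upper part of v it covers exactly the columns j \<ge> 2.\<close>

lemma upper_sum_add_upper_sum_phi:
  assumes "1 \<le> L" and cols: "\<And>j. j \<in> {1..L} \<Longrightarrow> (\<Sum>i=1..L. v (i, j)) = 1"
  shows "upper_sum L v + upper_sum L (phi L v) = real L - 1"
proof -
  have row: "(\<Sum>j=1..L. if i < j then v (i, j) else 0) + (\<Sum>p=1..L. if p < i then v (i, Suc p) else 0)
      = (\<Sum>j=2..L. v (i, j))" if "i \<in> {1..L}" for i
  proof -
    define h where "h j = (if j \<le> i then v (i, j) else 0)" for j
    have "(\<Sum>p=1..L. if p < i then v (i, Suc p) else 0) = (\<Sum>p=1..L. h (Suc p))"
      unfolding h_def by (intro sum.cong refl) auto
    also have "\<dots> = (\<Sum>j=2..L. h j) + h (Suc L)"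
      using assms(1) by (simp add: sum.shift_bounds_cl_Suc_ivl[symmetric] sum.cl_ivl_Suc numeral_2_eq_2)
    finally have "(\<Sum>p=1..L. if p < i then v (i, Suc p) else 0) = (\<Sum>j=2..L. if j \<le> i then v (i, j) else 0)"
      using that by (simp add: h_def)
    moreover have "(\<Sum>j=1..L. if i < j then v (i, j) else 0) = (\<Sum>j=2..L. if i < j then v (i, j) else 0)"
      using that by (subst sum.atLeast_Suc_atMost) (auto simp: numeral_2_eq_2)
    ultimately show ?thesis by (auto simp: sum.distrib[symmetric] intro!: sum.cong)
  qed
  have phi_upper: "upper_sum L (phi L v) = (\<Sum>i=1..L. \<Sum>p=1..L. if p < i then v (i, Suc p) else 0)"
    unfolding upper_sum_def phi_def by (subst sum.swap) (intro sum.cong refl, auto)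
  have "upper_sum L v + upper_sum L (phi L v)
      = (\<Sum>i=1..L. (\<Sum>j=1..L. if i < j then v (i, j) else 0)
                    + (\<Sum>p=1..L. if p < i then v (i, Suc p) else 0))"
    unfolding phi_upper unfolding upper_sum_def by (rule sum.distrib[symmetric])
  also have "\<dots> = (\<Sum>i=1..L. \<Sum>j=2..L. v (i, j))"
    by (intro sum.cong refl row)
  also have "\<dots> = (\<Sum>j=2..L. 1)"
    by (subst sum.swap) (use cols in \<open>intro sum.cong refl, auto\<close>)
  finally show ?thesis using assms(1) by simp
qed

lemma weighted_sum_upper_weight_phi:
  assumes "1 \<le> L" and "in_V L v"
  shows "weighted_sum L (upper_weight r) v + weighted_sum L (upper_weight r) (phi L v)
       = real L - 1 + r * (diag_sum L v + diag_sum L (phi L v))"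
  using upper_sum_add_upper_sum_phi[OF assms(1)] assms(2)
  unfolding weighted_sum_upper_weight in_V_def by (simp add: algebra_simps)

lemma weighted_sum_half_weight_phi:
  assumes "1 \<le> L" and "in_V L v"
  shows "weighted_sum L (half_weight r) v + weighted_sum L (half_weight r) (phi L v)
       = real L + (r - 1 / 2) * (diag_sum L v + diag_sum L (phi L v))"
proof -
  have half: "weighted_sum L (half_weight r) f = real L / 2 + (r - 1 / 2) * diag_sum L f"
    if "in_V L f" for f
    using that unfolding in_V_def by (intro weighted_sum_half_weight) auto
  show ?thesis
    using half[OF assms(2)] half[OF in_V_phi[OF assms]] by (simp add: algebra_simps)
qed

lemma min_weighting_bounds_le:
  fixes r D :: real
  assumes "0 \<le> r" "r \<le> 1 / 2"
  shows "min (r * D) (1 + (r - 1 / 2) * D) \<le> 2 * r"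
proof (cases "D \<le> 2")
  case True
  then show ?thesis using mult_left_mono[OF True \<open>0 \<le> r\<close>] by simp
next
  case False
  then have "(r - 1 / 2) * D \<le> (r - 1 / 2) * 2" using assms by (intro mult_left_mono_neg) auto
  then show ?thesis by (simp add: algebra_simps)
qed

theorem mainTheorem6:
  fixes A :: "('a, 'c) monoid_scheme" and B :: "('b, 'd) monoid_scheme"
    and L :: nat and a :: "nat \<Rightarrow> 'a" and b :: "nat \<Rightarrow> 'b"
    and v :: "nat \<times> nat \<Rightarrow> real"
  assumes "group A" and "group B" and "L \<ge> 1"
    and "\<And>i. i \<in> {1..L} \<Longrightarrow> a i \<in> carrier A - {\<one>\<^bsub>A\<^esub>}"
    and "\<And>i. i \<in> {1..L} \<Longrightarrow> b i \<in> carrier B - {\<one>\<^bsub>B\<^esub>}"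
    and "in_V L v"
  shows "kappa A L a v + kappa B L b (phi L v)
           \<le> real L - 1 + 2 * recip_enat (min_order A B L a b)"
proof -
  define N where "N = min_order A B L a b"
  define r where "r = recip_enat N"
  define D where "D = diag_sum L v + diag_sum L (phi L v)"
  have N: "2 \<le> N" using two_le_min_order[OF assms(1-5)] unfolding N_def .
  then have "0 < N" by (auto intro: order.strict_trans2[of 0 2])
  have r: "0 \<le> r" "r \<le> 1 / 2" using recip_enat_bounds[OF N] unfolding r_def by auto
  have bound: "kappa A L a v + kappa B L b (phi L v) \<le> weighted_sum L w v + weighted_sum L w (phi L v)"
    if "w = upper_weight r \<or> w = half_weight r" for w
    using that assms(1,2,4,5) in_V_phi[OF assms(3,6)] assms(6) r min_order_le[of _ L A B a b] \<open>0 < N\<close>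
    by (intro add_mono kappa_le_weighted_sum_order[where N = N])
      (auto simp: N_def r_def upper_weight_def half_weight_def in_V_def)
  have "kappa A L a v + kappa B L b (phi L v) \<le> real L - 1 + min (r * D) (1 + (r - 1 / 2) * D)"
    using bound[of "upper_weight r"] bound[of "half_weight r"]
      weighted_sum_upper_weight_phi[OF assms(3,6)] weighted_sum_half_weight_phi[OF assms(3,6)]
    unfolding D_def by (simp add: algebra_simps)
  also have "\<dots> \<le> real L - 1 + 2 * r" using min_weighting_bounds_le[OF r] by simp
  finally show ?thesis unfolding r_def N_def .
qed

end
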